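(* Let $P$ be a poset and $\Delta^\varphi=\{p_0<\dots<p_n\}$ a nondegenerate simplex of $N(P)$. The inclusion $\|\Delta^\varphi\|_P\hookrightarrow\varphi_P^{-1}(\{p_0,\dots,p_n\})$ is a filtered homotopy equivalence.
   Context: $\varphi_P:\|N(P)\|\to P$ sends a point $(\{q_0<\dots<q_m\},t)$, $t$ in the interior of $\Delta^m$, to $q_m$. $\|\Delta^\varphi\|_P$ is the realization of the simplex $\{p_0<\dots<p_n\}$ as a subspace of $\|N(P)\|$, and both it and $\varphi_P^{-1}(\{p_0,\dots,p_n\})\subseteq\|N(P)\|$ are filtered over $P$ by the restriction of $\varphi_P$. A filtered homotopy equivalence is a map $f$ commuting with the maps to $P$ admitting a filtered map $g$ in the other direction such that $f\circ g$ and $g\circ f$ are homotopic to the identities through homotopies $H:A\times[0,1]\to B$ commuting with the maps to $P$ (with $A\times[0,1]$ filtered via the projection to $A$). *)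

theory Defs
  imports "HOL-Analysis.Analysis"
begin

text \<open>The poset P is the universe of a type of class order.
  Points of the realization of the nerve N(P) are barycentric coordinate
  functions t : P \<Rightarrow> real: nonnegative, finitely supported, summing to 1,
  whose support is a chain (the support is the nondegenerate simplex in
  whose interior the point lies).\<close>

definition is_chain :: "'a::order set \<Rightarrow> bool" where
  "is_chain S \<longleftrightarrow> (\<forall>x\<in>S. \<forall>y\<in>S. x \<le> y \<or> y \<le> x)"

definition supp :: "('a \<Rightarrow> real) \<Rightarrow> 'a set" where
  "supp t = {x. t x \<noteq> 0}"

definition nerve_points :: "('a::order \<Rightarrow> real) set" where
  "nerve_points = {t. finite (supp t) \<and> (\<forall>x. 0 \<le> t x)
                     \<and> sum t (supp t) = 1 \<and> is_chain (supp t)}"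

definition closed_simplex :: "'a::order set \<Rightarrow> ('a \<Rightarrow> real) set" where
  "closed_simplex S = {t \<in> nerve_points. supp t \<subseteq> S}"

text \<open>Realization ||N(P)||, carrying the coherent (weak) topology with
  respect to its closed simplices, each topologized as a subspace of
  the (finite-dimensional) coordinate space.\<close>
definition nerve_realization :: "('a::order \<Rightarrow> real) topology" where
  "nerve_realization = topology (\<lambda>U. U \<subseteq> nerve_points \<and>
     (\<forall>S. finite S \<and> S \<noteq> {} \<and> is_chain S \<longrightarrow>
        openin (subtopology (product_topology (\<lambda>_. euclideanreal) UNIV)
                 (closed_simplex S)) (U \<inter> closed_simplex S)))"

definition phiP :: "('a::order \<Rightarrow> real) \<Rightarrow> 'a" where
  "phiP t = (THE q. q \<in> supp t \<and> (\<forall>x\<in>supp t. x \<le> q))"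

definition filtered_homotopy_equivalence ::
  "'x topology \<Rightarrow> ('x \<Rightarrow> 'p) \<Rightarrow> 'y topology \<Rightarrow> ('y \<Rightarrow> 'p) \<Rightarrow> ('x \<Rightarrow> 'y) \<Rightarrow> bool" where
  "filtered_homotopy_equivalence X phiX Y phiY f \<longleftrightarrow>
     continuous_map X Y f \<and> (\<forall>x\<in>topspace X. phiY (f x) = phiX x) \<and>
     (\<exists>g. continuous_map Y X g \<and> (\<forall>y\<in>topspace Y. phiX (g y) = phiY y) \<and>
        homotopic_with (\<lambda>h. \<forall>x\<in>topspace X. phiX (h x) = phiX x) X X (g \<circ> f) id \<and>
        homotopic_with (\<lambda>h. \<forall>y\<in>topspace Y. phiY (h y) = phiY y) Y Y (f \<circ> g) id)"

end

theory Submission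
  imports Defs
begin

text \<open>The straight-line homotopy H(s, t) = s t + (1 - s) t|_S / (sum of t over S) is defined on
  the points with positive weight on the face S, which include all of phi_P^-1(S). It ends on the
  face, fixes the face pointwise, and never moves the top vertex of the support once that vertex
  lies in S; hence it is a filtered deformation retraction of phi_P^-1(S) onto the face.

  Continuity for the coherent topology of ||N(P)|| is checked simplexwise: ||N(P)|| is a quotient
  of the disjoint union of its closed simplices, and the product of a quotient map with the locally
  compact Hausdorff space [0, 1] is again a quotient map.\<close>

lemma istopology_coherent:
  "istopology (\<lambda>U. U \<subseteq> M \<and> (\<forall>i. P i \<longrightarrow> openin (X i) (U \<inter> C i)))"
proof -
  have inter: "openin (X i) (U \<inter> V \<inter> C i)"
    if "openin (X i) (U \<inter> C i)" "openin (X i) (V \<inter> C i)" for i U V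
  proof -
    have "U \<inter> V \<inter> C i = (U \<inter> C i) \<inter> (V \<inter> C i)"
      by blast
    then show ?thesis
      using that by (simp only: openin_Int)
  qed
  have union: "openin (X i) (\<Union>K \<inter> C i)" if "\<forall>U\<in>K. openin (X i) (U \<inter> C i)" for i K
  proof -
    have "openin (X i) (\<Union>U\<in>K. U \<inter> C i)"
      using that by blast
    moreover have "(\<Union>U\<in>K. U \<inter> C i) = \<Union>K \<inter> C i"
      by blast
    ultimately show ?thesis
      by simp
  qed
  show ?thesis
    unfolding istopology_def
    by (intro conjI allI impI) (blast intro: inter union)+
qed

lemma continuous_map_prod_sum_topology:
  assumes "\<And>i. i \<in> I \<Longrightarrow> continuous_map (prod_topology K (X i)) Z (\<lambda>(k, x). G (k, (i, x)))"
  shows "continuous_map (prod_topology K (sum_topology X I)) Z G"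
  unfolding continuous_map_def
proof (intro conjI allI impI)
  show "G \<in> topspace (prod_topology K (sum_topology X I)) \<rightarrow> topspace Z"
  proof
    fix z
    assume "z \<in> topspace (prod_topology K (sum_topology X I))"
    then obtain k i x where "z = (k, (i, x))" "i \<in> I" "(k, x) \<in> topspace (prod_topology K (X i))"
      by auto
    then show "G z \<in> topspace Z"
      using continuous_map_image_subset_topspace[OF assms[OF \<open>i \<in> I\<close>]] by force
  qed
  fix W
  assume W: "openin Z W"
  show "openin (prod_topology K (sum_topology X I)) {z \<in> topspace (prod_topology K (sum_topology X I)). G z \<in> W}"
    (is "openin ?KX ?P")
  proof (subst openin_subopen, intro ballI)
    fix z
    assume "z \<in> ?P"
    then obtain k i x where z: "z = (k, (i, x))" "i \<in> I" "k \<in> topspace K" "x \<in> topspace (X i)"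
      and "G (k, (i, x)) \<in> W"
      by auto
    let ?Pi = "{y \<in> topspace (prod_topology K (X i)). (\<lambda>(k, x). G (k, (i, x))) y \<in> W}"
    have "openin (prod_topology K (X i)) ?Pi"
      using openin_continuous_map_preimage[OF assms[OF \<open>i \<in> I\<close>] W] .
    moreover have "(k, x) \<in> ?Pi"
      using z \<open>G (k, (i, x)) \<in> W\<close> by simp
    ultimately have "\<exists>U V. openin K U \<and> openin (X i) V \<and> k \<in> U \<and> x \<in> V \<and> U \<times> V \<subseteq> ?Pi"
      by (simp only: openin_prod_topology_alt)
    then obtain U V where UV: "openin K U" "openin (X i) V" "k \<in> U" "x \<in> V" "U \<times> V \<subseteq> ?Pi"
      by blast
    have "openin (sum_topology X I) (Sigma I (\<lambda>j. if j = i then V else {}))"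
      using UV(2) by (simp add: openin_disjoint_union)
    moreover have "Sigma I (\<lambda>j. if j = i then V else {}) = {i} \<times> V"
      using \<open>i \<in> I\<close> by (auto split: if_splits)
    ultimately have "openin ?KX (U \<times> ({i} \<times> V))"
      using UV(1) by (simp add: openin_prod_Times_iff)
    moreover have "z \<in> U \<times> ({i} \<times> V)"
      using z UV by simp
    moreover have "U \<times> ({i} \<times> V) \<subseteq> ?P"
      using UV(5) z(2) by auto
    ultimately show "\<exists>T. openin ?KX T \<and> z \<in> T \<and> T \<subseteq> ?P"
      by blast
  qed
qed

lemma continuous_map_prod_subtopology_invariant:
  assumes H: "continuous_map (prod_topology K (subtopology W A)) (subtopology W A) H"
    and "Y \<subseteq> A"
    and inv: "\<And>k y. k \<in> topspace K \<Longrightarrow> y \<in> topspace W \<Longrightarrow> y \<in> Y \<Longrightarrow> H (k, y) \<in> Y"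
  shows "continuous_map (prod_topology K (subtopology W Y)) (subtopology W Y) H"
proof -
  have "subtopology W Y = subtopology (subtopology W A) Y"
    using \<open>Y \<subseteq> A\<close> by (simp add: subtopology_subtopology Int_absorb1)
  then have "continuous_map (prod_topology K (subtopology W Y)) (subtopology W A) H"
    using continuous_map_from_subtopology[OF H, of "topspace K \<times> Y"]
    by (simp add: prod_topology_subtopology(2))
  then show ?thesis
    using inv by (auto simp: continuous_map_in_subtopology)
qed

lemma filtered_homotopy_equivalence_deformation_retract:
  fixes H :: "real \<times> 'x \<Rightarrow> 'x"
  assumes "X \<subseteq> Y" "Y \<subseteq> topspace W"
    and H: "continuous_map (prod_topology (top_of_set {0..1}) (subtopology W Y)) (subtopology W Y) H"
    and H1: "\<And>y. H (1, y) = y"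
    and H0: "\<And>y. y \<in> Y \<Longrightarrow> H (0, y) \<in> X"
    and H0_fix: "\<And>x. x \<in> X \<Longrightarrow> H (0, x) = x"
    and filtered: "\<And>s y. s \<in> {0..1} \<Longrightarrow> y \<in> Y \<Longrightarrow> \<phi> (H (s, y)) = \<phi> y"
  shows "filtered_homotopy_equivalence (subtopology W X) \<phi> (subtopology W Y) \<phi> id"
  unfolding filtered_homotopy_equivalence_def
proof (intro conjI exI ballI)
  let ?r = "\<lambda>y. H (0, y)"
  have top_X: "topspace (subtopology W X) = X" and top_Y: "topspace (subtopology W Y) = Y"
    using assms(1,2) by auto
  show "continuous_map (subtopology W X) (subtopology W Y) id"
    using assms(1) by (auto simp: continuous_map_from_subtopology continuous_map_in_subtopology)
  show "\<phi> (id x) = \<phi> x" for x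
    by simp
  have "continuous_map (subtopology W Y) (prod_topology (top_of_set {0..1}) (subtopology W Y)) (\<lambda>y. (0::real, y))"
    by (intro continuous_map_pairedI) simp_all
  from continuous_map_compose[OF this H]
  have "continuous_map (subtopology W Y) (subtopology W Y) ?r"
    by (simp add: o_def)
  then show "continuous_map (subtopology W Y) (subtopology W X) ?r"
    using assms(1) H0 top_Y by (auto simp: continuous_map_in_subtopology subtopology_subtopology)
  show "\<phi> (?r y) = \<phi> y" if "y \<in> topspace (subtopology W Y)" for y
    using filtered[of 0 y] that top_Y by simp
  show "homotopic_with (\<lambda>h. \<forall>x\<in>topspace (subtopology W X). \<phi> (h x) = \<phi> x)
      (subtopology W X) (subtopology W X) (?r \<circ> id) id"
    using H0_fix top_X by (intro homotopic_with_equal) (auto intro: continuous_map_eq[OF continuous_map_id])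
  show "homotopic_with (\<lambda>h. \<forall>y\<in>topspace (subtopology W Y). \<phi> (h y) = \<phi> y)
      (subtopology W Y) (subtopology W Y) (id \<circ> ?r) id"
    unfolding homotopic_with_def
    using H H1 filtered top_Y by (intro exI[of _ H]) auto
qed

lemma convex_combination_pos:
  fixes s a b :: real
  assumes "0 \<le> s" "s \<le> 1" "0 < a" "0 < b"
  shows "0 < s * a + (1 - s) * b"
proof (cases "s = 0")
  case False
  then have "0 < s * a"
    using assms by simp
  moreover have "0 \<le> (1 - s) * b"
    using assms by simp
  ultimately show ?thesis
    by linarith
qed (use assms in simp)

definition nerve_simplices :: "'a::order set set" where
  "nerve_simplices = {S. finite S \<and> S \<noteq> {} \<and> is_chain S}"

lemma openin_nerve_realization:
  "openin nerve_realization U \<longleftrightarrow> U \<subseteq> nerve_points \<and>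
     (\<forall>T\<in>nerve_simplices.
        openin (subtopology (powertop_real UNIV) (closed_simplex T)) (U \<inter> closed_simplex T))"
  unfolding nerve_realization_def topology_inverse'[OF istopology_coherent] nerve_simplices_def
  by auto

lemma nerve_points_in_closed_simplex: "t \<in> nerve_points \<Longrightarrow> t \<in> closed_simplex (supp t)"
  and supp_in_nerve_simplices: "t \<in> nerve_points \<Longrightarrow> supp t \<in> nerve_simplices"
  by (auto simp: closed_simplex_def nerve_simplices_def nerve_points_def)

definition simplex_sum :: "('a::order set \<times> ('a \<Rightarrow> real)) topology" where
  "simplex_sum = sum_topology (\<lambda>T. subtopology (powertop_real UNIV) (closed_simplex T)) nerve_simplices"

lemma topspace_simplex_sum: "topspace simplex_sum = Sigma nerve_simplices closed_simplex"
  by (simp add: simplex_sum_def o_def)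

lemma topspace_nerve_realization: "topspace nerve_realization = nerve_points"
proof -
  have "openin nerve_realization nerve_points"
    unfolding openin_nerve_realization
  proof (intro conjI ballI)
    fix T
    have "nerve_points \<inter> closed_simplex T = topspace (subtopology (powertop_real UNIV) (closed_simplex T))"
      by (auto simp: closed_simplex_def)
    then show "openin (subtopology (powertop_real UNIV) (closed_simplex T)) (nerve_points \<inter> closed_simplex T)"
      by (simp only: openin_topspace)
  qed simp
  moreover have "topspace nerve_realization \<subseteq> nerve_points"
    using openin_nerve_realization[THEN iffD1, OF openin_topspace] by (rule conjunct1)
  ultimately show ?thesis
    by (meson openin_subset subset_antisym)
qed

lemma openin_simplex_sum:
  "openin simplex_sum W \<longleftrightarrow> W \<subseteq> topspace simplex_sum \<and>
     (\<forall>T\<in>nerve_simplices. openin (subtopology (powertop_real UNIV) (closed_simplex T)) {t. (T, t) \<in> W})"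
  by (simp add: simplex_sum_def openin_sum_topology o_def)

lemma quotient_map_simplex_sum: "quotient_map simplex_sum nerve_realization snd"
  unfolding quotient_map_def topspace_nerve_realization
proof (intro conjI allI impI)
  show "snd ` topspace simplex_sum = nerve_points"
  proof
    show "snd ` topspace simplex_sum \<subseteq> nerve_points"
      by (auto simp: topspace_simplex_sum closed_simplex_def)
    have "(supp t, t) \<in> topspace simplex_sum" if "t \<in> nerve_points" for t
      using that by (simp add: topspace_simplex_sum nerve_points_in_closed_simplex supp_in_nerve_simplices)
    then show "nerve_points \<subseteq> snd ` topspace simplex_sum"
      by force
  qed
  fix U
  assume "U \<subseteq> nerve_points"
  moreover have "{t. (T, t) \<in> {x \<in> topspace simplex_sum. snd x \<in> U}} = U \<inter> closed_simplex T"
    if "T \<in> nerve_simplices" for T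
    using that by (auto simp: topspace_simplex_sum)
  ultimately show "openin simplex_sum {x \<in> topspace simplex_sum. snd x \<in> U} \<longleftrightarrow>
      openin nerve_realization U"
    by (simp add: openin_simplex_sum openin_nerve_realization)
qed

lemma continuous_map_prod_nerve_realization:
  fixes K :: "'k topology" and A :: "('a::order \<Rightarrow> real) set"
  assumes K: "locally_compact_space K" "Hausdorff_space K"
    and A: "openin nerve_realization A"
    and F: "\<And>T. T \<in> nerve_simplices \<Longrightarrow>
      continuous_map (prod_topology K (subtopology (powertop_real UNIV) (closed_simplex T \<inter> A))) Z F"
  shows "continuous_map (prod_topology K (subtopology nerve_realization A)) Z F"
proof -
  define q :: "'k \<times> 'a set \<times> ('a \<Rightarrow> real) \<Rightarrow> 'k \<times> ('a \<Rightarrow> real)"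
    where "q = (\<lambda>(k, y). (k, snd y))"
  define \<Sigma> where "\<Sigma> = Sigma nerve_simplices (\<lambda>T. closed_simplex T \<inter> A)"
  define SA where
    "SA = sum_topology (\<lambda>T. subtopology (powertop_real UNIV) (closed_simplex T \<inter> A)) nerve_simplices"
  have "quotient_map (prod_topology K simplex_sum) (prod_topology K nerve_realization) q"
    unfolding q_def using K quotient_map_simplex_sum by (blast intro: quotient_map_prod_right)
  moreover have "{z \<in> topspace (prod_topology K simplex_sum). q z \<in> topspace K \<times> A} = topspace K \<times> \<Sigma>"
    by (auto simp: q_def \<Sigma>_def topspace_simplex_sum)
  moreover have "openin (prod_topology K nerve_realization) (topspace K \<times> A)"
    using A by (simp add: openin_prod_Times_iff)
  ultimately have "quotient_map (subtopology (prod_topology K simplex_sum) (topspace K \<times> \<Sigma>))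
      (subtopology (prod_topology K nerve_realization) (topspace K \<times> A)) q"
    by (blast intro: quotient_map_restriction)
  moreover have "subtopology simplex_sum \<Sigma> = SA"
    by (simp add: \<Sigma>_def SA_def simplex_sum_def subtopology_sum_topology subtopology_subtopology Int_assoc)
  ultimately have "quotient_map (prod_topology K SA) (prod_topology K (subtopology nerve_realization A)) q"
    by (simp flip: prod_topology_subtopology(2))
  moreover have "continuous_map (prod_topology K SA) Z (F \<circ> q)"
    unfolding SA_def
    by (rule continuous_map_prod_sum_topology) (simp add: q_def F case_prod_beta')
  ultimately show ?thesis
    by (rule continuous_compose_quotient_map)
qed

lemma continuous_map_closed_simplex_nerve_realization:
  "T \<in> nerve_simplices \<Longrightarrow>
    continuous_map (subtopology (powertop_real UNIV) (closed_simplex T)) nerve_realization id"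
  using continuous_map_compose[OF continuous_map_component_injection
      quotient_imp_continuous_map[OF quotient_map_simplex_sum[unfolded simplex_sum_def]]]
  by (simp add: o_def id_def)

lemma continuous_map_coordinate: "continuous_map (subtopology (powertop_real UNIV) B) euclideanreal (\<lambda>t. t x)"
  using continuous_map_product_projection[of x UNIV "\<lambda>_. euclideanreal"]
  by (simp add: continuous_map_from_subtopology)

lemma phiP_eqI: "q \<in> supp t \<Longrightarrow> (\<And>x. x \<in> supp t \<Longrightarrow> x \<le> q) \<Longrightarrow> phiP t = q"
  unfolding phiP_def by (rule the_equality) (auto intro: order.antisym)

lemma phiP_in_supp: "t \<in> nerve_points \<Longrightarrow> phiP t \<in> supp t"
  and le_phiP: "t \<in> nerve_points \<Longrightarrow> x \<in> supp t \<Longrightarrow> x \<le> phiP t"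
proof -
  assume t: "t \<in> nerve_points"
  then have "finite (supp t)" "supp t \<noteq> {}" "is_chain (supp t)"
    by (auto simp: nerve_points_def)
  then obtain m where m: "m \<in> supp t" "\<And>x. x \<in> supp t \<Longrightarrow> x \<le> m"
    by (metis finite_has_maximal is_chain_def)
  then have "phiP t = m"
    by (rule phiP_eqI)
  with m show "phiP t \<in> supp t" "x \<in> supp t \<Longrightarrow> x \<le> phiP t"
    by auto
qed

lemma phiP_pos: "t \<in> nerve_points \<Longrightarrow> t (phiP t) > 0"
  using phiP_in_supp by (fastforce simp: nerve_points_def supp_def order.order_iff_strict)

lemma sum_Int_supp: "finite A \<Longrightarrow> sum t (A \<inter> supp t) = sum t A"
  by (rule sum.mono_neutral_left) (auto simp: supp_def)

lemma sum_nerve_point_eq_1: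
  assumes "t \<in> nerve_points" "finite A" "supp t \<subseteq> A"
  shows "sum t A = 1"
  using assms sum_Int_supp[of A t] by (simp add: nerve_points_def Int_absorb1)

text \<open>Outside this set the normalising denominator of \<open>face_homotopy\<close> vanishes, and the
  division by zero silently produces junk.\<close>

definition face_neighbourhood :: "'a::order set \<Rightarrow> ('a \<Rightarrow> real) set" where
  "face_neighbourhood S = {t \<in> nerve_points. sum t S > 0}"

definition face_homotopy :: "'a set \<Rightarrow> real \<times> ('a \<Rightarrow> real) \<Rightarrow> 'a \<Rightarrow> real" where
  "face_homotopy S = (\<lambda>(s, t) x. s * t x + (1 - s) * (if x \<in> S then t x / sum t S else 0))"

lemma face_neighbourhoodI:
  assumes "finite S" "t \<in> nerve_points" "phiP t \<in> S"
  shows "t \<in> face_neighbourhood S"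
proof -
  have "0 < t (phiP t)"
    using assms(2) by (rule phiP_pos)
  also have "t (phiP t) \<le> sum t S"
    using assms by (intro member_le_sum) (auto simp: nerve_points_def)
  finally show ?thesis
    using assms(2) by (simp add: face_neighbourhood_def)
qed

lemma face_homotopy_apply:
  "face_homotopy S (s, t) x = s * t x + (1 - s) * (if x \<in> S then t x / sum t S else 0)"
  by (simp add: face_homotopy_def)

lemma face_homotopy_1: "face_homotopy S (1, t) = t"
  by (simp add: fun_eq_iff face_homotopy_apply)

lemma supp_face_homotopy_subset: "supp (face_homotopy S (s, t)) \<subseteq> supp t"
  by (auto simp: supp_def face_homotopy_apply)

lemma sum_face_homotopy:
  assumes "finite A"
  shows "sum (face_homotopy S (s, t)) A = s * sum t A + (1 - s) * sum t (A \<inter> S) / sum t S"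
proof -
  have "(\<Sum>x\<in>A. if x \<in> S then t x / sum t S else 0) = sum t (A \<inter> S) / sum t S"
    using assms by (simp add: sum.If_cases sum_divide_distrib)
  then show ?thesis
    by (simp add: face_homotopy_apply sum.distrib flip: sum_distrib_left)
qed

lemma face_homotopy_in_face_neighbourhood:
  assumes S: "finite S" and t: "t \<in> face_neighbourhood S" and s: "s \<in> {0..1}"
  shows "face_homotopy S (s, t) \<in> face_neighbourhood S"
proof -
  let ?h = "face_homotopy S (s, t)"
  have tn: "t \<in> nerve_points" and c: "sum t S > 0"
    using t by (auto simp: face_neighbourhood_def)
  then have fin: "finite (supp t)" and chain: "is_chain (supp t)" and nonneg: "\<And>x. 0 \<le> t x"
    and one: "sum t (supp t) = 1"
    by (auto simp: nerve_points_def)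
  have "0 \<le> ?h x" for x
    using nonneg[of x] s c by (simp add: face_homotopy_apply)
  moreover have "finite (supp ?h)" "is_chain (supp ?h)"
    using finite_subset[OF supp_face_homotopy_subset fin] chain supp_face_homotopy_subset[of S s t]
    unfolding is_chain_def by blast+
  moreover have "sum ?h (supp ?h) = 1"
  proof -
    have "sum ?h (supp ?h) = sum ?h (supp t)"
      using sum_Int_supp[OF fin, of ?h] Int_absorb1[OF supp_face_homotopy_subset[of S s t]]
      by metis
    also have "\<dots> = s * sum t (supp t) + (1 - s) * sum t (supp t \<inter> S) / sum t S"
      using fin by (simp add: sum_face_homotopy)
    also have "sum t (supp t \<inter> S) = sum t S"
      using sum_Int_supp[OF S, of t] by (simp add: Int_commute)
    finally show ?thesis
      using one c by simp
  qed
  moreover have "sum ?h S > 0"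
  proof -
    have "sum ?h S = s * sum t S + (1 - s) * 1"
      using S c by (simp add: sum_face_homotopy)
    then show ?thesis
      using s c convex_combination_pos[of s "sum t S" 1] by simp
  qed
  ultimately show ?thesis
    by (simp add: face_neighbourhood_def nerve_points_def)
qed

lemma face_homotopy_in_closed_simplex:
  "t \<in> closed_simplex T \<Longrightarrow> face_homotopy S (s, t) \<in> nerve_points \<Longrightarrow>
    face_homotopy S (s, t) \<in> closed_simplex T"
  using supp_face_homotopy_subset by (fastforce simp: closed_simplex_def)

lemma phiP_face_homotopy:
  assumes S: "finite S" and t: "t \<in> face_neighbourhood S" and s: "s \<in> {0..1}" and "phiP t \<in> S"
  shows "phiP (face_homotopy S (s, t)) = phiP t"
proof (rule phiP_eqI)
  have tn: "t \<in> nerve_points" and "sum t S > 0"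
    using t by (auto simp: face_neighbourhood_def)
  then have "0 < s * t (phiP t) + (1 - s) * (t (phiP t) / sum t S)"
    using s phiP_pos[OF tn] by (intro convex_combination_pos) auto
  then have "face_homotopy S (s, t) (phiP t) > 0"
    using \<open>phiP t \<in> S\<close> by (simp add: face_homotopy_apply)
  then show "phiP t \<in> supp (face_homotopy S (s, t))"
    by (simp add: supp_def)
  show "x \<le> phiP t" if "x \<in> supp (face_homotopy S (s, t))" for x
    using le_phiP[OF tn] supp_face_homotopy_subset[of S s t] that by blast
qed

lemma face_homotopy_in_phiP_preimage:
  assumes S: "finite S" and "t \<in> nerve_points" "phiP t \<in> S" "s \<in> {0..1}"
  shows "face_homotopy S (s, t) \<in> {t \<in> nerve_points. phiP t \<in> S}"
proof -
  have t: "t \<in> face_neighbourhood S"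
    using S assms(2,3) by (rule face_neighbourhoodI)
  then have "face_homotopy S (s, t) \<in> face_neighbourhood S"
    using S assms(4) by (intro face_homotopy_in_face_neighbourhood)
  moreover have "phiP (face_homotopy S (s, t)) = phiP t"
    using S t assms(3,4) by (intro phiP_face_homotopy)
  ultimately show ?thesis
    using assms(3) by (simp add: face_neighbourhood_def)
qed

lemma face_homotopy_0_in_closed_simplex:
  assumes "finite S" "t \<in> face_neighbourhood S"
  shows "face_homotopy S (0, t) \<in> closed_simplex S"
  using face_homotopy_in_face_neighbourhood[OF assms, of 0]
  by (auto simp: face_neighbourhood_def closed_simplex_def supp_def face_homotopy_apply)

lemma face_homotopy_0_on_closed_simplex:
  assumes "finite S" "t \<in> closed_simplex S"
  shows "face_homotopy S (0, t) = t"
proof -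
  have "sum t S = 1" and "supp t \<subseteq> S"
    using assms sum_nerve_point_eq_1 by (auto simp: closed_simplex_def)
  then show ?thesis
    by (auto simp: fun_eq_iff face_homotopy_apply supp_def)
qed

lemma openin_face_neighbourhood:
  fixes S :: "'a::order set"
  assumes "finite S"
  shows "openin nerve_realization (face_neighbourhood S)"
  unfolding openin_nerve_realization
proof (intro conjI ballI)
  show "face_neighbourhood S \<subseteq> nerve_points"
    by (auto simp: face_neighbourhood_def)
  fix T :: "'a set"
  let ?X = "subtopology (powertop_real UNIV) (closed_simplex T)"
  have "continuous_map ?X euclideanreal (\<lambda>t. sum t S)"
    using assms by (intro continuous_map_sum continuous_map_coordinate)
  then have "openin ?X {t \<in> topspace ?X. sum t S \<in> {0<..}}"
    by (rule openin_continuous_map_preimage) simp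
  moreover have "{t \<in> topspace ?X. sum t S \<in> {0<..}} = face_neighbourhood S \<inter> closed_simplex T"
    by (auto simp: face_neighbourhood_def closed_simplex_def)
  ultimately show "openin ?X (face_neighbourhood S \<inter> closed_simplex T)"
    by simp
qed

lemma continuous_map_face_homotopy_coordinatewise:
  assumes "finite S" and nonzero: "\<And>t. t \<in> B \<Longrightarrow> sum t S \<noteq> 0"
  shows "continuous_map (prod_topology (top_of_set {0..1}) (subtopology (powertop_real UNIV) B))
           (powertop_real UNIV) (face_homotopy S)"
  unfolding continuous_map_componentwise_UNIV
proof
  fix x
  let ?Z = "prod_topology (top_of_set {0..1::real}) (subtopology (powertop_real UNIV) B)"
  have coord: "continuous_map ?Z euclideanreal (\<lambda>z. snd z y)" for y
    using continuous_map_compose[OF continuous_map_snd continuous_map_coordinate] by (simp add: o_def)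
  have "continuous_map ?Z euclideanreal fst"
    using continuous_map_fst continuous_map_into_fulltopology by blast
  then have "continuous_map ?Z euclideanreal
      (\<lambda>z. fst z * snd z x + (1 - fst z) * (if x \<in> S then snd z x / sum (snd z) S else 0))"
    using coord assms by (intro continuous_intros) auto
  then show "continuous_map ?Z euclideanreal (\<lambda>z. face_homotopy S z x)"
    by (simp add: face_homotopy_def case_prod_beta)
qed

lemma continuous_map_face_homotopy:
  assumes S: "finite S"
  shows "continuous_map (prod_topology (top_of_set {0..1}) (subtopology nerve_realization (face_neighbourhood S)))
           (subtopology nerve_realization (face_neighbourhood S)) (face_homotopy S)"
proof (rule continuous_map_prod_nerve_realization)
  show "locally_compact_space (top_of_set {0..1::real})"
    by (simp add: compact_imp_locally_compact_space compact_space_subtopology)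
  show "Hausdorff_space (top_of_set {0..1::real})"
    by (simp add: Hausdorff_space_subtopology)
  show "openin nerve_realization (face_neighbourhood S)"
    using S by (rule openin_face_neighbourhood)
  fix T :: "'a set"
  assume T: "T \<in> nerve_simplices"
  let ?B = "closed_simplex T \<inter> face_neighbourhood S"
  have image: "face_homotopy S z \<in> closed_simplex T \<inter> face_neighbourhood S"
    if "z \<in> {0..1} \<times> ?B" for z
    using that face_homotopy_in_face_neighbourhood[OF S] face_homotopy_in_closed_simplex
    by (fastforce simp: face_neighbourhood_def)
  have "continuous_map (prod_topology (top_of_set {0..1}) (subtopology (powertop_real UNIV) ?B))
      (powertop_real UNIV) (face_homotopy S)"
    using S by (rule continuous_map_face_homotopy_coordinatewise) (auto simp: face_neighbourhood_def)
  then have "continuous_map (prod_topology (top_of_set {0..1}) (subtopology (powertop_real UNIV) ?B))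
      (subtopology (powertop_real UNIV) (closed_simplex T)) (face_homotopy S)"
    using image by (auto simp: continuous_map_in_subtopology)
  then have "continuous_map (prod_topology (top_of_set {0..1}) (subtopology (powertop_real UNIV) ?B))
      nerve_realization (face_homotopy S)"
    using continuous_map_compose[OF _ continuous_map_closed_simplex_nerve_realization[OF T]] by (simp add: o_def)
  then show "continuous_map (prod_topology (top_of_set {0..1}) (subtopology (powertop_real UNIV) ?B))
      (subtopology nerve_realization (face_neighbourhood S)) (face_homotopy S)"
    using image by (auto simp: continuous_map_in_subtopology)
qed

theorem lemma2p17:
  fixes S :: "'a::order set"
  assumes "finite S" and "S \<noteq> {}" and "is_chain S"
  shows "filtered_homotopy_equivalence
           (subtopology nerve_realization (closed_simplex S)) phiP
           (subtopology nerve_realization {t \<in> nerve_points. phiP t \<in> S}) phiP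
           id"
proof -
  let ?Y = "{t \<in> nerve_points. phiP t \<in> S}"
  have Y_nbhd: "t \<in> face_neighbourhood S" if "t \<in> ?Y" for t
    using that by (simp add: face_neighbourhoodI[OF assms(1)])
  show ?thesis
  proof (rule filtered_homotopy_equivalence_deformation_retract)
    show "closed_simplex S \<subseteq> ?Y"
      using phiP_in_supp by (auto simp: closed_simplex_def)
    show "?Y \<subseteq> topspace nerve_realization"
      by (simp add: topspace_nerve_realization)
    show "continuous_map (prod_topology (top_of_set {0..1}) (subtopology nerve_realization ?Y))
        (subtopology nerve_realization ?Y) (face_homotopy S)"
      by (rule continuous_map_prod_subtopology_invariant[OF continuous_map_face_homotopy[OF assms(1)]])
        (use Y_nbhd face_homotopy_in_phiP_preimage[OF assms(1)] in auto)
    show "face_homotopy S (1, t) = t" for t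
      by (rule face_homotopy_1)
    show "face_homotopy S (0, t) \<in> closed_simplex S" if "t \<in> ?Y" for t
      using that Y_nbhd by (intro face_homotopy_0_in_closed_simplex[OF assms(1)]) auto
    show "face_homotopy S (0, t) = t" if "t \<in> closed_simplex S" for t
      using assms(1) that by (rule face_homotopy_0_on_closed_simplex)
    show "phiP (face_homotopy S (s, t)) = phiP t" if "s \<in> {0..1}" "t \<in> ?Y" for s t
      using that Y_nbhd by (intro phiP_face_homotopy[OF assms(1)]) auto
  qed
qed

end
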